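(* Let $U_1, \ldots, U_n$ be i.i.d. $\mathrm{Unif}([0, 1])$ with order statistics $U_{(1)}\le \ldots \le U_{(n)}$, and fix $\delta \in (0,1)$. Suppose $0\le b_1\le b_2\le \ldots \le b_{n}\le 1$ are reals such that \[\mathbb{P}\left[ U_{(1)}\le b_{1}, \ldots, U_{(n)}\le b_{n} \right] \ge 1 - \delta.\] Let $b_{0} = 0$, $b_{n+1} = 1$, and let $h: [0, 1]\to [0, 1]$ be the piecewise constant function $h(t) = b_{\lceil (n + 1)t\rceil}$, $t\in [0, 1]$. Define $\hat{u}^{\mathrm{(ccv)}} = h\circ \hat{u}^{\mathrm{(marg)}}$. Then, if $X_{2n+1}\sim P_X$ is independent of $\mathcal{D}$, \[\mathbb{P}\left[ \mathbb{P}\left[ \hat{u}^{\mathrm{(ccv)}}(X_{2n+1}) \leq t \mid \mathcal{D} \right] \leq t \text{ for all } t \in (0,1) \right] \geq 1-\delta.\]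
   Context: Setting: $P_X$ is a distribution on $\mathbb{R}^d$. Data $X_1,\dots,X_{2n}$ are i.i.d. from $P_X$; $\mathcal{D}^{\mathrm{train}}=\{X_1,\dots,X_n\}$ is treated as fixed (all probabilities conditional on it), $\mathcal{D}^{\mathrm{cal}}=\{X_{n+1},\dots,X_{2n}\}$, $\mathcal{D}=\mathcal{D}^{\mathrm{train}}\cup\mathcal{D}^{\mathrm{cal}}$. The score $\hat s:\mathbb{R}^d\to\mathbb{R}$ is a fixed function determined by $\mathcal{D}^{\mathrm{train}}$. Marginal conformal p-value: $\hat{u}^{\mathrm{(marg)}}(x) = \frac{1 + |\{i \in \{n+1,\dots,2n\} : \hat{s}(X_i) \le \hat{s}(x)\}|}{n+1}$. *)

theory Defs
  imports "HOL-Probability.Probability"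
begin

definition order_stat :: "nat \<Rightarrow> (nat \<Rightarrow> real) \<Rightarrow> nat \<Rightarrow> real" where
  "order_stat n U k = sort (map U [0..<n]) ! (k - 1)"

text \<open>Marginal conformal p-value with calibration points cal 0, ..., cal (n-1)
  (these play the role of X_{n+1}, ..., X_{2n}).\<close>
definition u_marg :: "('a \<Rightarrow> real) \<Rightarrow> nat \<Rightarrow> (nat \<Rightarrow> 'a) \<Rightarrow> 'a \<Rightarrow> real" where
  "u_marg s n cal x = (1 + real (card {i \<in> {0..<n}. s (cal i) \<le> s x})) / (real n + 1)"

definition h_fun :: "nat \<Rightarrow> (nat \<Rightarrow> real) \<Rightarrow> real \<Rightarrow> real" where
  "h_fun n b t = b (nat \<lceil>(real n + 1) * t\<rceil>)"

definition u_ccv :: "('a \<Rightarrow> real) \<Rightarrow> nat \<Rightarrow> (nat \<Rightarrow> real) \<Rightarrow> (nat \<Rightarrow> 'a) \<Rightarrow> 'a \<Rightarrow> real" where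
  "u_ccv s n b cal x = h_fun n b (u_marg s n cal x)"

end

theory Submission
  imports Defs
begin

text \<open>Let G be the law of the test score s(X) and Q its quantile function. The ccv p-value
  of a test point with score y is b (1 + #{i. S i \<le> y}) for the calibration scores S, and S has
  the joint law of (Q U_1, ..., Q U_n) for i.i.d. uniform U_i. So it suffices that this p-value
  is super-uniform under G for the scores Q U_i whenever U_(k) \<le> b_k for all k, i.e. whenever at
  least k of the U_i lie below b_k. Given t, let k be the largest index with b_k \<le> t. The p-value
  is at most t only if fewer than k scores lie below y, which forces y < Q b_k, and
  G (-\<infinity>, Q b_k) \<le> b_k \<le> t.\<close>

definition count_le :: "nat \<Rightarrow> (nat \<Rightarrow> real) \<Rightarrow> real \<Rightarrow> nat" where
  "count_le n S y = card {i \<in> {0..<n}. S i \<le> y}"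

lemma count_le_le: "count_le n S y \<le> n"
  unfolding count_le_def by (rule order.trans[OF card_mono[of "{0..<n}"]]) auto

lemma count_le_mono: "y \<le> y' \<Longrightarrow> count_le n S y \<le> count_le n S y'"
  unfolding count_le_def by (intro card_mono) auto

lemma count_le_compose: "count_le n (compose {0..<n} f U) = count_le n (f \<circ> U)"
  unfolding count_le_def compose_def by (intro ext arg_cong[where f = card]) auto

lemma sorted_nth_le_iff_card:
  fixes ys :: "'a::linorder list"
  assumes "sorted ys" and k: "k \<in> {1..length ys}"
  shows "ys ! (k - 1) \<le> c \<longleftrightarrow> k \<le> card {j. j < length ys \<and> ys ! j \<le> c}"
proof
  assume "ys ! (k - 1) \<le> c"
  have "{0..<k} \<subseteq> {j. j < length ys \<and> ys ! j \<le> c}"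
  proof
    fix j assume "j \<in> {0..<k}"
    then have "ys ! j \<le> ys ! (k - 1)"
      using assms by (intro sorted_nth_mono) auto
    then show "j \<in> {j. j < length ys \<and> ys ! j \<le> c}"
      using \<open>j \<in> {0..<k}\<close> \<open>ys ! (k - 1) \<le> c\<close> k by auto
  qed
  then have "card {0..<k} \<le> card {j. j < length ys \<and> ys ! j \<le> c}"
    by (intro card_mono) auto
  then show "k \<le> card {j. j < length ys \<and> ys ! j \<le> c}"
    by simp
next
  assume card_ge: "k \<le> card {j. j < length ys \<and> ys ! j \<le> c}"
  show "ys ! (k - 1) \<le> c"
  proof (rule ccontr)
    assume "\<not> ys ! (k - 1) \<le> c"
    have "{j. j < length ys \<and> ys ! j \<le> c} \<subseteq> {0..<k - 1}"
    proof
      fix j assume j: "j \<in> {j. j < length ys \<and> ys ! j \<le> c}"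
      have "j < k - 1"
      proof (rule ccontr)
        assume "\<not> j < k - 1"
        then have "ys ! (k - 1) \<le> ys ! j"
          using assms j by (intro sorted_nth_mono) auto
        then show False
          using j \<open>\<not> ys ! (k - 1) \<le> c\<close> by auto
      qed
      then show "j \<in> {0..<k - 1}" by simp
    qed
    then have "card {j. j < length ys \<and> ys ! j \<le> c} \<le> card {0..<k - 1}"
      by (intro card_mono) auto
    then show False
      using card_ge k by auto
  qed
qed

lemma order_stat_le_iff_count_le:
  assumes "k \<in> {1..n}"
  shows "order_stat n U k \<le> c \<longleftrightarrow> k \<le> count_le n U c"
proof -
  let ?ys = "sort (map U [0..<n])"
  have "card {j. j < length ?ys \<and> ?ys ! j \<le> c} = length (filter (\<lambda>x. x \<le> c) ?ys)"
    by (simp add: length_filter_conv_card)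
  also have "\<dots> = length (filter (\<lambda>x. x \<le> c) (map U [0..<n]))"
    by (metis mset_filter mset_sort size_mset)
  also have "\<dots> = count_le n U c"
    by (simp add: count_le_def filter_map length_filter_conv_card o_def conj_commute
        cong: conj_cong)
  finally show ?thesis
    using sorted_nth_le_iff_card[of ?ys k c] assms by (simp add: order_stat_def)
qed

definition calibrated :: "real measure \<Rightarrow> nat \<Rightarrow> (nat \<Rightarrow> real) \<Rightarrow> (nat \<Rightarrow> real) \<Rightarrow> bool" where
  "calibrated G n b S \<longleftrightarrow> (\<forall>t\<in>{0<..<1}. measure G {y. b (1 + count_le n S y) \<le> t} \<le> t)"

lemma calibrated_compose: "calibrated G n b (compose {0..<n} f U) \<longleftrightarrow> calibrated G n b (f \<circ> U)"
  by (simp add: calibrated_def count_le_compose)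

text \<open>The value 0 outside (0,1) is arbitrary: that set is null for the uniform law.\<close>
definition quantile :: "real measure \<Rightarrow> real \<Rightarrow> real" where
  "quantile G \<omega> = (if \<omega> \<in> {0<..<1} then Inf {x. \<omega> \<le> cdf G x} else 0)"

context cdf_distribution
begin

lemma mono_on_quantile: "mono_on {0<..<1} (quantile M)"
  using mono_I by (simp add: mono_on_def quantile_def)

lemma measurable_quantile[measurable]: "quantile M \<in> borel_measurable borel"
  using measurable_CI unfolding quantile_def
  by (subst (asm) measurable_restrict_space_iff) auto

lemma measure_lessThan_quantile_le:
  assumes u: "u \<in> {0<..<1}"
  shows "measure M {..< quantile M u} \<le> u"
proof (rule tendsto_upperbound[OF cdf_at_left])
  show "\<forall>\<^sub>F x in at_left (quantile M u). cdf M x \<le> u"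
  proof (rule eventually_mono[OF eventually_at_left_real[of "quantile M u - 1"]])
    fix x assume "x \<in> {quantile M u - 1<..<quantile M u}"
    then show "cdf M x \<le> u"
      using pseudoinverse[of u x] u by (auto simp: quantile_def)
  qed simp
qed simp

lemma distr_uniform_quantile: "distr (uniform_measure lborel {0..1}) M (quantile M) = M"
proof -
  let ?V = "uniform_measure lborel {0..1::real}"
  let ?\<Omega> = "restrict_space lborel {0<..<1::real}"
  have "distr ?V M (quantile M) = distr ?V borel (quantile M)"
    by (rule distr_cong) auto
  also have "\<dots> = distr ?\<Omega> borel I"
  proof (rule measure_eqI)
    fix A assume "A \<in> sets (distr ?V borel (quantile M))"
    then have A: "A \<in> sets borel" by simp
    have QA: "quantile M -` A \<in> sets borel"
      using measurable_sets[OF measurable_quantile A] by simp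
    have "emeasure (distr ?V borel (quantile M)) A = emeasure lborel ({0..1} \<inter> quantile M -` A)"
      using A QA by (simp add: emeasure_distr divide_ennreal_def)
    also have "\<dots> = emeasure lborel (quantile M -` A \<inter> {0<..<1})"
    proof (rule emeasure_eq_AE)
      show "AE x in lborel. (x \<in> {0..1} \<inter> quantile M -` A) = (x \<in> quantile M -` A \<inter> {0<..<1})"
        using AE_lborel_singleton[of "0::real"] AE_lborel_singleton[of "1::real"]
        by eventually_elim auto
    qed (use QA in auto)
    also have "\<dots> = emeasure ?\<Omega> (I -` A \<inter> space ?\<Omega>)"
      by (subst emeasure_restrict_space)
         (auto simp: space_restrict_space quantile_def intro!: arg_cong[where f = "emeasure lborel"])
    also have "\<dots> = emeasure (distr ?\<Omega> borel I) A"
      using measurable_CI A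
      by (intro emeasure_distr[symmetric]) (simp_all add: measurable_cong_sets sets_restrict_space)
    finally show "emeasure (distr ?V borel (quantile M)) A = emeasure (distr ?\<Omega> borel I) A" .
  qed simp
  also have "\<dots> = M"
    by (rule distr_I_eq_M)
  finally show ?thesis .
qed

lemma count_le_quantile_ge:
  assumes "\<forall>i<n. 0 < U i" and "u < 1"
  shows "count_le n U u \<le> count_le n (quantile M \<circ> U) (quantile M u)"
  unfolding count_le_def
proof (intro card_mono subsetI)
  fix i assume "i \<in> {i \<in> {0..<n}. U i \<le> u}"
  with assms have "U i \<in> {0<..<1}" "u \<in> {0<..<1}" "U i \<le> u" by auto
  then show "i \<in> {i \<in> {0..<n}. (quantile M \<circ> U) i \<le> quantile M u}"
    using \<open>i \<in> _\<close> mono_on_quantile by (auto simp: mono_on_def)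
qed simp

lemma count_le_quantile_lt:
  assumes "\<forall>i<n. 0 < U i" and "k \<le> count_le n U u" and "u \<in> {0<..<1}"
    and "count_le n (quantile M \<circ> U) y < k"
  shows "y < quantile M u"
proof (rule ccontr)
  assume "\<not> y < quantile M u"
  then have "count_le n (quantile M \<circ> U) (quantile M u) \<le> count_le n (quantile M \<circ> U) y"
    by (intro count_le_mono) simp
  then show False
    using assms count_le_quantile_ge[of n U u] by simp
qed

lemma calibrated_quantile:
  assumes pos: "\<forall>i<n. 0 < U i"
    and count: "\<forall>k\<in>{1..n}. k \<le> count_le n U (b k)"
    and "b (n + 1) = 1"
  shows "calibrated M n b (quantile M \<circ> U)"
  unfolding calibrated_def
proof
  fix t :: real assume t: "t \<in> {0<..<1}"
  let ?N = "count_le n (quantile M \<circ> U)"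
  let ?A = "{y. b (1 + ?N y) \<le> t}"
  define K where "K = {k \<in> {1..n}. b k \<le> t}"
  have index_in_K: "1 + ?N y \<in> K" if "y \<in> ?A" for y
    using that t \<open>b (n + 1) = 1\<close> count_le_le[of n "quantile M \<circ> U" y]
    by (cases "1 + ?N y = n + 1") (auto simp: K_def)
  show "measure M ?A \<le> t"
  proof (cases "K = {}")
    case True
    then have "?A = {}" using index_in_K by blast
    then show ?thesis using t by simp
  next
    case False
    define k where "k = Max K"
    have "finite K" by (simp add: K_def)
    then have "k \<in> K" and k_max: "\<And>k'. k' \<in> K \<Longrightarrow> k' \<le> k"
      using False by (simp_all add: k_def)
    then have k: "k \<in> {1..n}" "b k \<le> t" and k_le: "k \<le> count_le n U (b k)"
      using count by (auto simp: K_def)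
    have "b k > 0"
    proof (rule ccontr)
      assume "\<not> b k > 0"
      with pos have "count_le n U (b k) = 0"
        by (force simp: count_le_def)
      with k k_le show False by simp
    qed
    with k t have bk: "b k \<in> {0<..<1}" by auto
    have "?A \<subseteq> {..< quantile M (b k)}"
      using index_in_K k_max count_le_quantile_lt[OF pos k_le bk] by fastforce
    then have "measure M ?A \<le> measure M {..< quantile M (b k)}"
      by (intro finite_measure_mono) auto
    also have "\<dots> \<le> b k"
      using bk by (rule measure_lessThan_quantile_le)
    finally show ?thesis using k by simp
  qed
qed

end

lemma measurable_count_le:
  assumes "\<And>i. i < n \<Longrightarrow> f i \<in> borel_measurable M" and "g \<in> borel_measurable M"
  shows "(\<lambda>x. count_le n (\<lambda>i. f i x) (g x)) \<in> measurable M (count_space UNIV)"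
  unfolding count_le_def
proof (rule measurable_card)
  fix i
  show "{x \<in> space M. i \<in> {i \<in> {0..<n}. f i x \<le> g x}} \<in> sets M"
  proof (cases "i < n")
    case True
    with assms have [measurable]: "f i \<in> borel_measurable M" "g \<in> borel_measurable M" by auto
    show ?thesis using True by simp
  qed simp
qed

lemma sets_count_le_level: "{y. b (1 + count_le n S y) \<le> t} \<in> sets borel"
proof -
  have "(\<lambda>y. count_le n (\<lambda>i. S i) y) \<in> measurable borel (count_space UNIV)"
    by (rule measurable_count_le) auto
  from measurable_sets[OF this, of "{k. b (1 + k) \<le> t}"]
  show ?thesis
    by (simp add: vimage_def)
qed

lemma measurable_measure_count_le_level:
  fixes M :: "real measure"
  assumes "sigma_finite_measure M" and "sets M = sets borel"
  shows "(\<lambda>S. measure M {y. b (1 + count_le n S y) \<le> t}) \<in> borel_measurable (PiM {0..<n} (\<lambda>_. borel))"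
proof -
  let ?N = "PiM {0..<n} (\<lambda>_. borel) \<Otimes>\<^sub>M (borel :: real measure)"
  let ?Q = "{z \<in> space ?N. b (1 + count_le n (fst z) (snd z)) \<le> t}"
  have "(\<lambda>z. count_le n (\<lambda>i. fst z i) (snd z)) \<in> measurable ?N (count_space UNIV)"
  proof (rule measurable_count_le)
    fix i assume "i < n"
    then have [measurable]: "i \<in> {0..<n}" by simp
    show "(\<lambda>z. fst z i) \<in> borel_measurable ?N" by measurable
  qed simp
  from measurable_sets[OF this, of "{k. b (1 + k) \<le> t}"]
  have "?Q \<in> sets ?N"
    by (simp add: Int_def conj_commute)
  also have "sets ?N = sets (PiM {0..<n} (\<lambda>_. borel) \<Otimes>\<^sub>M M)"
    by (rule sets_pair_measure_cong[OF refl assms(2)[symmetric]])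
  finally have "(\<lambda>S. enn2real (emeasure M (Pair S -` ?Q))) \<in> borel_measurable (PiM {0..<n} (\<lambda>_. borel))"
    by (intro borel_measurable_enn2real sigma_finite_measure.measurable_emeasure_Pair[OF assms(1)])
  moreover have "Pair S -` ?Q = {y. b (1 + count_le n S y) \<le> t}"
    if "S \<in> space (PiM {0..<n} (\<lambda>_. borel))" for S
    using that by (auto simp: space_pair_measure)
  ultimately show ?thesis
    by (simp add: measure_def cong: measurable_cong)
qed

lemma mono_le_self_on_interval_iff_rat:
  fixes g :: "real \<Rightarrow> real"
  assumes "mono g"
  shows "(\<forall>t\<in>{a<..<b}. g t \<le> t) \<longleftrightarrow> (\<forall>q. of_rat q \<in> {a<..<b} \<longrightarrow> g (of_rat q) \<le> of_rat q)"
proof (intro iffI ballI)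
  fix t assume rat: "\<forall>q. of_rat q \<in> {a<..<b} \<longrightarrow> g (of_rat q) \<le> of_rat q" and t: "t \<in> {a<..<b}"
  show "g t \<le> t"
  proof (rule ccontr)
    assume "\<not> g t \<le> t"
    then obtain r where r: "r \<in> \<rat>" "t < r" "r < min (g t) b"
      using t Rats_dense_in_real[of t "min (g t) b"] by auto
    then obtain q where q: "r = of_rat q"
      by (auto elim: Rats_cases)
    have "g t \<le> g r"
      using \<open>mono g\<close> r(2) by (simp add: monoD)
    also have "g r \<le> r"
      using rat[rule_format, of q] r t unfolding q by simp
    finally show False
      using r by simp
  qed
qed simp

lemma (in real_distribution) sets_calibrated:
  "{S \<in> space (PiM {0..<n} (\<lambda>_. borel)). calibrated M n b S} \<in> sets (PiM {0..<n} (\<lambda>_. borel))"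
proof -
  have [measurable]: "(\<lambda>S. measure M {y. b (1 + count_le n S y) \<le> t}) \<in> borel_measurable (PiM {0..<n} (\<lambda>_. borel))" for t
    by (rule measurable_measure_count_le_level[OF sigma_finite_measure_axioms events_eq_borel])
  have level_mono: "mono (\<lambda>t. measure M {y. b (1 + count_le n S y) \<le> t})" for S
  proof (intro monoI finite_measure_mono)
    fix t
    show "{y. b (1 + count_le n S y) \<le> t} \<in> sets M"
      using sets_count_le_level by simp
  next
    fix t t' :: real assume "t \<le> t'"
    then show "{y. b (1 + count_le n S y) \<le> t} \<subseteq> {y. b (1 + count_le n S y) \<le> t'}"
      by auto
  qed
  have "calibrated M n b S \<longleftrightarrow>
      (\<forall>q. real_of_rat q \<in> {0<..<1} \<longrightarrow>
         measure M {y. b (1 + count_le n S y) \<le> of_rat q} \<le> of_rat q)" for S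
    unfolding calibrated_def by (rule mono_le_self_on_interval_iff_rat[OF level_mono])
  then show ?thesis
    by (simp only:) measurable
qed

lemma measure_PiM_compose_Collect:
  assumes "finite I" and "prob_space M" and "prob_space N"
    and f: "f \<in> measurable M N" and "distr M N f = N"
    and Q: "{y \<in> space (PiM I (\<lambda>_. N)). Q y} \<in> sets (PiM I (\<lambda>_. N))"
  shows "measure (PiM I (\<lambda>_. M)) {x \<in> space (PiM I (\<lambda>_. M)). Q (compose I f x)}
    = measure (PiM I (\<lambda>_. N)) {y \<in> space (PiM I (\<lambda>_. N)). Q y}"
proof -
  have f_I: "compose I f \<in> measurable (PiM I (\<lambda>_. M)) (PiM I (\<lambda>_. N))"
    using f unfolding compose_def by measurable
  have "distr (PiM I (\<lambda>_. M)) (PiM I (\<lambda>_. N)) (compose I f) = PiM I (\<lambda>_. N)"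
    using assms by (subst distr_PiM_finite_prob_space') auto
  moreover have "{x \<in> space (PiM I (\<lambda>_. M)). Q (compose I f x)}
      = compose I f -` {y \<in> space (PiM I (\<lambda>_. N)). Q y} \<inter> space (PiM I (\<lambda>_. M))"
    using measurable_space[OF f_I] by auto
  ultimately show ?thesis
    using measure_distr[OF f_I Q] by simp
qed

lemma (in cdf_distribution) measure_order_stat_bounds_le_calibrated:
  fixes n :: nat
  defines "V \<equiv> PiM {0..<n} (\<lambda>_. uniform_measure lborel {0..1::real})"
  assumes "b (n + 1) = 1"
  shows "measure V {U \<in> space V. \<forall>k\<in>{1..n}. order_stat n U k \<le> b k}
    \<le> measure V {U \<in> space V. calibrated M n b (compose {0..<n} (quantile M) U)}"
proof -
  have "prob_space (uniform_measure lborel {0..1::real})"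
    by (intro prob_space_uniform_measure) auto
  then interpret V: prob_space V
    unfolding V_def by (intro prob_space_PiM)
  have "AE x in uniform_measure lborel {0..1}. 0 < (x::real)"
    using AE_lborel_singleton[of 0] by (intro AE_uniform_measureI) (auto elim: eventually_mono)
  then have AE_pos: "AE U in V. \<forall>i\<in>{0..<n}. 0 < U i"
    unfolding V_def using \<open>prob_space _\<close>
    by (intro eventually_ball_finite AE_PiM_component ballI) auto
  let ?B = "{U \<in> space V. \<forall>k\<in>{1..n}. k \<le> count_le n U (b k)}"
  have B_eq: "{U \<in> space V. \<forall>k\<in>{1..n}. order_stat n U k \<le> b k} = ?B"
    by (simp add: order_stat_le_iff_count_le)
  have "compose {0..<n} (quantile M) \<in> measurable V (PiM {0..<n} (\<lambda>_. borel))"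
    unfolding V_def compose_def by measurable
  from measurable_sets[OF this sets_calibrated] measurable_space[OF this]
  have C: "{U \<in> space V. calibrated M n b (compose {0..<n} (quantile M) U)} \<in> sets V"
    by (simp add: vimage_def Int_def conj_commute cong: conj_cong)
  have "AE U in V. U \<in> ?B \<longrightarrow> U \<in> {U \<in> space V. calibrated M n b (compose {0..<n} (quantile M) U)}"
    using AE_pos
  proof eventually_elim
    case (elim U)
    then show ?case
      using calibrated_quantile[of n U b] \<open>b (n + 1) = 1\<close> by (auto simp: calibrated_compose)
  qed
  then show ?thesis
    unfolding B_eq using C by (rule V.finite_measure_mono_AE)
qed

lemma u_ccv_eq_count_le: "u_ccv s n b cal x = b (1 + count_le n (s \<circ> cal) (s x))"
proof -
  define c where "c = count_le n (s \<circ> cal) (s x)"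
  have "(real n + 1) * ((1 + real c) / (real n + 1)) = real (1 + c)"
    by (simp add: field_simps)
  moreover have "u_ccv s n b cal x = b (nat \<lceil>(real n + 1) * ((1 + real c) / (real n + 1))\<rceil>)"
    by (simp add: u_ccv_def h_fun_def u_marg_def c_def count_le_def)
  ultimately show ?thesis
    unfolding c_def by (simp only: ceiling_of_nat nat_int)
qed

lemma u_ccv_valid_iff_calibrated:
  assumes "s \<in> borel_measurable P"
  shows "(\<forall>t\<in>{0<..<1}. measure P {x \<in> space P. u_ccv s n b cal x \<le> t} \<le> t)
    \<longleftrightarrow> calibrated (distr P borel s) n b (s \<circ> cal)"
proof -
  have "measure (distr P borel s) {y. b (1 + count_le n (s \<circ> cal) y) \<le> t}
      = measure P {x \<in> space P. u_ccv s n b cal x \<le> t}" for t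
    using measure_distr[OF assms sets_count_le_level]
    by (simp add: u_ccv_eq_count_le vimage_def Int_def conj_commute)
  then show ?thesis
    by (simp add: calibrated_def)
qed

theorem theorem4:
  fixes P :: "(real ^ 'd) measure" and s :: "real ^ 'd \<Rightarrow> real"
    and n :: nat and b :: "nat \<Rightarrow> real" and \<delta> :: real
  assumes "prob_space P" and "sets P = sets borel"
    and "s \<in> borel_measurable P"
    and "0 < \<delta>" and "\<delta> < 1"
    and "\<forall>i \<in> {1..n}. 0 \<le> b i \<and> b i \<le> 1"
    and "mono_on {1..n} b"
    and "b 0 = 0" and "b (n + 1) = 1"
    and "measure (PiM {0..<n} (\<lambda>_. uniform_measure lborel {0..1::real}))
           {U \<in> space (PiM {0..<n} (\<lambda>_. uniform_measure lborel {0..1::real})).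
              \<forall>k \<in> {1..n}. order_stat n U k \<le> b k} \<ge> 1 - \<delta>"
  shows "measure (PiM {0..<n} (\<lambda>_. P))
           {cal \<in> space (PiM {0..<n} (\<lambda>_. P)).
              \<forall>t \<in> {0<..<1::real}.
                measure P {x \<in> space P. u_ccv s n b cal x \<le> t} \<le> t} \<ge> 1 - \<delta>"
proof -
  interpret P: prob_space P by fact
  define G where "G = distr P borel s"
  interpret G: cdf_distribution G
    unfolding G_def using assms(3) by (intro cdf_distribution.intro P.real_distribution_distr) simp
  let ?Pn = "PiM {0..<n} (\<lambda>_. P)" and ?Gn = "PiM {0..<n} (\<lambda>_. G)"
    and ?V = "PiM {0..<n} (\<lambda>_. uniform_measure lborel {0..1::real})"
  have "sets ?Gn = sets (PiM {0..<n} (\<lambda>_. borel))"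
    by (intro sets_PiM_cong) simp_all
  then have W: "{S \<in> space ?Gn. calibrated G n b S} \<in> sets ?Gn"
    using G.sets_calibrated sets_eq_imp_space_eq by metis
  have "1 - \<delta> \<le> measure ?V {U \<in> space ?V. \<forall>k\<in>{1..n}. order_stat n U k \<le> b k}"
    by fact
  also have "\<dots> \<le> measure ?V {U \<in> space ?V. calibrated G n b (compose {0..<n} (quantile G) U)}"
    by (rule G.measure_order_stat_bounds_le_calibrated) fact
  also have "\<dots> = measure ?Gn {S \<in> space ?Gn. calibrated G n b S}"
    using W G.prob_space_axioms
    by (intro measure_PiM_compose_Collect G.distr_uniform_quantile prob_space_uniform_measure) auto
  also have "\<dots> = measure ?Pn {cal \<in> space ?Pn. calibrated G n b (compose {0..<n} s cal)}"
    using W assms(1,3) G.prob_space_axioms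
    by (intro measure_PiM_compose_Collect[symmetric]) (auto simp: G_def intro: distr_cong)
  also have "\<dots> = measure ?Pn {cal \<in> space ?Pn.
      \<forall>t \<in> {0<..<1::real}. measure P {x \<in> space P. u_ccv s n b cal x \<le> t} \<le> t}"
    by (simp add: u_ccv_valid_iff_calibrated[OF assms(3)] calibrated_compose G_def)
  finally show ?thesis .
qed

end
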